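(* Consider a liquid ($l$), its vapor ($v$) and a gas ($g$), each with extensive entropy $S_k$ of $(M_k,V_k,E_k)$ that is concave, positively homogeneous of degree 1, upper semi-continuous, with non-empty closed convex domain, and $\mathcal C^2$ with $\partial S_k/\partial E>0$; let $s_k(\tau,e)=S_k(1,\tau,e)$, $1/T_k=\partial_e s_k$, $p_k/T_k=\partial_\tau s_k$. Fix the gas mass fraction $\varphi_g\in[0,1]$ and define, for $\tau,e>0$, $$s_{PT}(\tau,e,\varphi_g)=\max\Big\{\sum_{k}\varphi_k s_k(\tau_k,e_k)\ :\ \varphi_l+\varphi_v=1-\varphi_g,\ e=\sum_k\varphi_ke_k,\ \tau=\varphi_l\tau_l+\varphi_g\tau_g,\ \varphi_v\tau_v=\varphi_g\tau_g\Big\},$$ the maximum being over $\varphi_l,\varphi_v\ge0$ and $(\tau_k,e_k)_k$, and assume it is attained at an interior point, at which the phases have a common temperature $T=T_l=T_g=T_v$ and the mixture pressure is $p=p_l=p_g+p_v$. Then $s_{PT}$ depends only on $(\tau,e)$ and satisfies $T\,ds_{PT}=de+p\,d\tau$ (i.e. $\partial_e s_{PT}=1/T$, $\partial_\tau s_{PT}=p/T$), where $T$ and $p$ are the mixture temperature and pressure at equilibrium.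
   Context: $\varphi_k$, $\tau_k$, $e_k$ are the mass fraction, specific volume and specific internal energy of phase $k$; vapor and gas occupy the same volume ($\varphi_v\tau_v=\varphi_g\tau_g$) while the liquid occupies a separate volume; mass transfer is allowed between liquid and vapor only. *)

theory Defs
  imports "HOL-Analysis.Analysis"
begin

text \<open>Extensive variables of a phase: (M, V, E) :: real \<times> real \<times> real.
  An extensive entropy is a real function S on its domain D (it is -\<infinity> outside D).\<close>

definition usc_on :: "(real \<times> real \<times> real) set \<Rightarrow> (real \<times> real \<times> real \<Rightarrow> real) \<Rightarrow> bool" where
  "usc_on D S \<longleftrightarrow> (\<forall>x\<in>D. \<forall>a. S x < a \<longrightarrow> (\<forall>\<^sub>F y in at x within D. S y < a))"

definition C2_on :: "(real \<times> real \<times> real) set \<Rightarrow> (real \<times> real \<times> real \<Rightarrow> real) \<Rightarrow> bool" where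
  "C2_on U S \<longleftrightarrow>
     (\<exists>S1 :: real \<times> real \<times> real \<Rightarrow> (real \<times> real \<times> real) \<Rightarrow>\<^sub>L real.
      \<exists>S2 :: real \<times> real \<times> real \<Rightarrow> (real \<times> real \<times> real) \<Rightarrow>\<^sub>L ((real \<times> real \<times> real) \<Rightarrow>\<^sub>L real).
        (\<forall>x\<in>U. (S has_derivative blinfun_apply (S1 x)) (at x)) \<and>
        (\<forall>x\<in>U. (S1 has_derivative blinfun_apply (S2 x)) (at x)) \<and>
        continuous_on U S2)"

definition extensive_entropy :: "(real \<times> real \<times> real) set \<Rightarrow> (real \<times> real \<times> real \<Rightarrow> real) \<Rightarrow> bool" where
  "extensive_entropy D S \<longleftrightarrow>
     D \<noteq> {} \<and> closed D \<and> convex D \<and>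
     (\<forall>x\<in>D. \<forall>t>0. t *\<^sub>R x \<in> D) \<and>
     concave_on D S \<and>
     (\<forall>x\<in>D. \<forall>t>0. S (t *\<^sub>R x) = t * S x) \<and>
     usc_on D S \<and>
     C2_on (interior D) S \<and>
     (\<forall>x\<in>interior D. \<forall>S'. (S has_derivative S') (at x) \<longrightarrow> S' (0, 0, 1) > 0)"

definition spec :: "(real \<times> real \<times> real \<Rightarrow> real) \<Rightarrow> real \<Rightarrow> real \<Rightarrow> real" where
  "spec S \<tau> e = S (1, \<tau>, e)"

definition temp :: "(real \<times> real \<times> real \<Rightarrow> real) \<Rightarrow> real \<Rightarrow> real \<Rightarrow> real" where
  "temp S \<tau> e = 1 / deriv (\<lambda>e'. spec S \<tau> e') e"

definition pres :: "(real \<times> real \<times> real \<Rightarrow> real) \<Rightarrow> real \<Rightarrow> real \<Rightarrow> real" where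
  "pres S \<tau> e = temp S \<tau> e * deriv (\<lambda>\<tau>'. spec S \<tau>' e) \<tau>"

text \<open>A configuration: (\<phi>_l, \<phi>_v, (\<tau>_l,e_l), (\<tau>_v,e_v), (\<tau>_g,e_g)).\<close>
type_synonym config = "real \<times> real \<times> (real \<times> real) \<times> (real \<times> real) \<times> (real \<times> real)"

definition feasible ::
  "(real \<times> real \<times> real) set \<Rightarrow> (real \<times> real \<times> real) set \<Rightarrow> (real \<times> real \<times> real) set \<Rightarrow>
   real \<Rightarrow> real \<Rightarrow> real \<Rightarrow> config \<Rightarrow> bool" where
  "feasible Dl Dv Dg \<phi>g \<tau> e c \<longleftrightarrow>
     (case c of (\<phi>l, \<phi>v, (\<tau>l, el), (\<tau>v, ev), (\<tau>g, eg)) \<Rightarrow>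
        \<phi>l \<ge> 0 \<and> \<phi>v \<ge> 0 \<and> \<phi>l + \<phi>v = 1 - \<phi>g \<and>
        e = \<phi>l * el + \<phi>v * ev + \<phi>g * eg \<and>
        \<tau> = \<phi>l * \<tau>l + \<phi>g * \<tau>g \<and>
        \<phi>v * \<tau>v = \<phi>g * \<tau>g \<and>
        (1, \<tau>l, el) \<in> Dl \<and> (1, \<tau>v, ev) \<in> Dv \<and> (1, \<tau>g, eg) \<in> Dg)"

definition mix_entropy ::
  "(real \<times> real \<times> real \<Rightarrow> real) \<Rightarrow> (real \<times> real \<times> real \<Rightarrow> real) \<Rightarrow> (real \<times> real \<times> real \<Rightarrow> real) \<Rightarrow>
   real \<Rightarrow> config \<Rightarrow> real" where
  "mix_entropy Sl Sv Sg \<phi>g c =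
     (case c of (\<phi>l, \<phi>v, (\<tau>l, el), (\<tau>v, ev), (\<tau>g, eg)) \<Rightarrow>
        \<phi>l * spec Sl \<tau>l el + \<phi>v * spec Sv \<tau>v ev + \<phi>g * spec Sg \<tau>g eg)"

definition s_PT ::
  "(real \<times> real \<times> real) set \<Rightarrow> (real \<times> real \<times> real) set \<Rightarrow> (real \<times> real \<times> real) set \<Rightarrow>
   (real \<times> real \<times> real \<Rightarrow> real) \<Rightarrow> (real \<times> real \<times> real \<Rightarrow> real) \<Rightarrow> (real \<times> real \<times> real \<Rightarrow> real) \<Rightarrow>
   real \<Rightarrow> real \<Rightarrow> real \<Rightarrow> real" where
  "s_PT Dl Dv Dg Sl Sv Sg \<tau> e \<phi>g =
     Sup (mix_entropy Sl Sv Sg \<phi>g ` {c. feasible Dl Dv Dg \<phi>g \<tau> e c})"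

end

theory Submission
  imports Defs
begin

text \<open>By concavity each specific entropy lies below its tangent plane at the optimal state.
  Equal temperatures give the three planes the common energy slope 1/T, the pressure balance
  gives p_l/T = p_g/T + p_v/T, and stationarity of the mixture entropy under mass transfer from
  vapour to liquid makes the liquid and vapour planes share their intercept (equal Gibbs free
  energies). Weighted by the mass fractions, the planes then add up on every feasible
  configuration to one affine function of (\<tau>, e) with slopes (p/T, 1/T), which bounds s_PT from
  above and touches it at (\<tau>, e). From below, s_PT dominates the entropy of the optimal
  configuration in which only the liquid state is shifted to absorb the change of (\<tau>, e); this
  lower bound is differentiable with the same slopes, and the two bounds squeeze s_PT.\<close>

lemma concave_on_le_tangent:
  fixes S :: "'a::real_normed_vector \<Rightarrow> real"
  assumes conc: "concave_on D S" and X: "X \<in> D" and Y: "Y \<in> D"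
    and der: "(S has_derivative S') (at X)"
  shows "S Y \<le> S X + S' (Y - X)"
proof -
  define g where "g t = S (X + t *\<^sub>R (Y - X))" for t :: real
  have "((\<lambda>t. X + t *\<^sub>R (Y - X)) has_derivative (\<lambda>t. t *\<^sub>R (Y - X))) (at 0)"
    by (auto intro!: derivative_eq_intros)
  then have "(g has_derivative (\<lambda>t. S' (t *\<^sub>R (Y - X)))) (at 0)"
    unfolding g_def using has_derivative_compose[of "\<lambda>t. X + t *\<^sub>R (Y - X)" _ 0 UNIV S S'] der
    by simp
  moreover have "linear S'" using der has_derivative_linear by blast
  ultimately have "(g has_real_derivative S' (Y - X)) (at 0)"
    unfolding has_field_derivative_def
    by (auto elim: has_derivative_eq_rhs simp: fun_eq_iff linear_scale mult.commute)
  then have "((\<lambda>h. (g (0 + h) - g 0) / h) \<longlongrightarrow> S' (Y - X)) (at 0)"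
    by (simp only: DERIV_def)
  then have "((\<lambda>h. (g h - g 0) / h) \<longlongrightarrow> S' (Y - X)) (at_right 0)"
    using tendsto_within_subset[of _ _ 0 UNIV "{0<..}"] by simp
  moreover have "\<forall>\<^sub>F h in at_right 0. S Y - S X \<le> (g h - g 0) / h"
    using eventually_at_right_real[OF zero_less_one]
  proof (rule eventually_mono)
    fix h :: real assume h: "h \<in> {0<..<1}"
    have "(1 - h) * S X + h * S Y \<le> S ((1 - h) *\<^sub>R X + h *\<^sub>R Y)"
      using concave_onD[OF conc, of h X Y] h X Y by auto
    also have "(1 - h) *\<^sub>R X + h *\<^sub>R Y = X + h *\<^sub>R (Y - X)" by (simp add: algebra_simps)
    finally show "S Y - S X \<le> (g h - g 0) / h"
      using h by (simp add: g_def field_simps)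
  qed
  ultimately have "S Y - S X \<le> S' (Y - X)"
    by (intro tendsto_le[OF _ _ tendsto_const]) simp_all
  then show ?thesis by simp
qed

lemma has_derivative_squeeze:
  fixes f g h :: "'a::real_normed_vector \<Rightarrow> real"
  assumes g: "(g has_derivative D) (at x)" and h: "(h has_derivative D) (at x)"
    and between: "\<forall>\<^sub>F y in nhds x. g y \<le> f y \<and> f y \<le> h y" and touch: "g x = h x"
  shows "(f has_derivative D) (at x)"
proof -
  define R where "R k y = norm (k y - k x - D (y - x)) / norm (y - x)"
    for k :: "'a \<Rightarrow> real" and y
  have fx: "f x = g x" "f x = h x" using eventually_nhds_x_imp_x[OF between] touch by auto
  have "(R g \<longlongrightarrow> 0) (at x)" "(R h \<longlongrightarrow> 0) (at x)"
    using g h unfolding has_derivative_iff_norm R_def by blast+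
  from tendsto_add[OF this] have lim: "((\<lambda>y. R g y + R h y) \<longlongrightarrow> 0) (at x)"
    by simp
  have le: "\<forall>\<^sub>F y in at x. R f y \<le> R g y + R h y"
    using between unfolding eventually_at_filter
  proof (rule eventually_mono, intro impI)
    fix y assume "g y \<le> f y \<and> f y \<le> h y"
    then have "\<bar>f y - f x - D (y - x)\<bar> \<le> \<bar>g y - g x - D (y - x)\<bar> + \<bar>h y - h x - D (y - x)\<bar>"
      using fx(1) touch by (auto simp: abs_if)
    then show "R f y \<le> R g y + R h y"
      unfolding R_def add_divide_distrib[symmetric] by (simp add: divide_right_mono)
  qed
  have "(R f \<longlongrightarrow> 0) (at x)"
    by (rule tendsto_sandwich[OF _ le tendsto_const lim]) (simp add: R_def)
  then show ?thesis
    using g has_derivative_bounded_linear unfolding has_derivative_iff_norm R_def by blast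
qed

lemma DERIV_compose_uncurry:
  fixes f :: "real \<Rightarrow> real \<Rightarrow> real"
  assumes f: "((\<lambda>(a, b). f a b) has_derivative (\<lambda>(u, v). B * u + C * v)) (at (t, x))"
    and g1: "(g1 has_real_derivative d1) (at z)" "g1 z = t"
    and g2: "(g2 has_real_derivative d2) (at z)" "g2 z = x"
  shows "((\<lambda>w. f (g1 w) (g2 w)) has_real_derivative B * d1 + C * d2) (at z)"
proof -
  have g: "((\<lambda>w. (g1 w, g2 w)) has_derivative (\<lambda>h. (d1 * h, d2 * h))) (at z)"
    using g1 g2 unfolding has_field_derivative_def by (intro has_derivative_Pair)
  have "((\<lambda>w. (\<lambda>(a, b). f a b) (g1 w, g2 w)) has_derivative
      (\<lambda>h. (\<lambda>(u, v). B * u + C * v) (d1 * h, d2 * h))) (at z)"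
    by (rule has_derivative_compose[OF g]) (use f g1(2) g2(2) in simp)
  then have "((\<lambda>w. f (g1 w) (g2 w)) has_derivative (\<lambda>h. B * (d1 * h) + C * (d2 * h))) (at z)"
    by simp
  then show ?thesis
    unfolding has_field_derivative_def
    by (rule has_derivative_eq_rhs) (simp add: fun_eq_iff algebra_simps)
qed

lemma deriv_uncurry_partials:
  fixes f :: "real \<Rightarrow> real \<Rightarrow> real"
  assumes "((\<lambda>(a, b). f a b) has_derivative (\<lambda>(u, v). B * u + C * v)) (at (t, x))"
  shows "deriv (\<lambda>a. f a x) t = B" and "deriv (\<lambda>b. f t b) x = C"
proof -
  have "((\<lambda>a. f a x) has_real_derivative B * 1 + C * 0) (at t)"
    by (rule DERIV_compose_uncurry[OF assms]) (auto intro!: derivative_eq_intros)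
  then show "deriv (\<lambda>a. f a x) t = B" by (simp add: DERIV_imp_deriv)
  have "((\<lambda>b. f t b) has_real_derivative B * 0 + C * 1) (at x)"
    by (rule DERIV_compose_uncurry[OF assms]) (auto intro!: derivative_eq_intros)
  then show "deriv (\<lambda>b. f t b) x = C" by (simp add: DERIV_imp_deriv)
qed

lemma linear_apply_triple_0:
  fixes L :: "real \<times> real \<times> real \<Rightarrow> real"
  assumes "linear L"
  shows "L (0, u, v) = L (0, 1, 0) * u + L (0, 0, 1) * v"
proof -
  have "(0::real, u, v) = u *\<^sub>R (0, 1, 0) + v *\<^sub>R (0, 0, 1)" by simp
  then show ?thesis by (simp only: linear_add[OF assms] linear_scale[OF assms]) simp
qed

lemma spec_has_derivative:
  assumes "(S has_derivative S') (at (1, t, x))"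
  shows "((\<lambda>(a, b). spec S a b) has_derivative (\<lambda>(u, v). S' (0, 1, 0) * u + S' (0, 0, 1) * v)) (at (t, x))"
proof -
  have lin: "linear S'" using assms has_derivative_linear by blast
  have "((\<lambda>p. (1::real, fst p, snd p)) has_derivative (\<lambda>p. (0, fst p, snd p))) (at (t, x))"
    by (auto intro!: derivative_eq_intros)
  from has_derivative_compose[OF this] assms
  have "((\<lambda>p. S (1, fst p, snd p)) has_derivative (\<lambda>p. S' (0, fst p, snd p))) (at (t, x))"
    by simp
  then show ?thesis
    unfolding spec_def split_beta'
    by (rule has_derivative_eq_rhs) (rule ext, rule linear_apply_triple_0[OF lin])
qed

lemma spec_le_tangent:
  assumes "concave_on D S" "(S has_derivative S') (at (1, t, x))" "(1, t, x) \<in> D" "(1, t', x') \<in> D"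
  shows "spec S t' x' \<le> spec S t x + S' (0, 1, 0) * (t' - t) + S' (0, 0, 1) * (x' - x)"
proof -
  have "S (1, t', x') \<le> S (1, t, x) + S' (0, t' - t, x' - x)"
    using concave_on_le_tangent[OF assms(1,3,4,2)] by simp
  then show ?thesis
    unfolding linear_apply_triple_0[OF has_derivative_linear[OF assms(2)], of "t' - t" "x' - x"]
    by (simp add: spec_def)
qed

lemma extensive_entropy_tangent_plane:
  assumes ent: "extensive_entropy D S" and X: "(1, t, x) \<in> interior D"
  obtains B C where
    "((\<lambda>(a, b). spec S a b) has_derivative (\<lambda>(u, v). B * u + C * v)) (at (t, x))"
    "\<And>t' x'. (1, t', x') \<in> D \<Longrightarrow> spec S t' x' \<le> spec S t x + B * (t' - t) + C * (x' - x)"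
    "C > 0" "temp S t x = 1 / C" "pres S t x = B / C"
proof -
  from ent obtain S1 :: "real \<times> real \<times> real \<Rightarrow> (real \<times> real \<times> real) \<Rightarrow>\<^sub>L real"
    where "\<And>y. y \<in> interior D \<Longrightarrow> (S has_derivative blinfun_apply (S1 y)) (at y)"
    unfolding extensive_entropy_def C2_on_def by blast
  with X obtain S' where dS: "(S has_derivative S') (at (1, t, x))" by blast
  have conc: "concave_on D S" and pos: "S' (0, 0, 1) > 0"
    using ent X dS unfolding extensive_entropy_def by blast+
  note d = spec_has_derivative[OF dS]
  show thesis
  proof (rule that[OF d spec_le_tangent[OF conc dS interior_subset[THEN subsetD, OF X]] pos])
    show "temp S t x = 1 / S' (0, 0, 1)" "pres S t x = S' (0, 1, 0) / S' (0, 0, 1)"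
      using deriv_uncurry_partials[OF d] by (simp_all add: temp_def pres_def)
  qed
qed

lemma tangent_planes_mix:
  fixes \<phi>g a b t1 x1 t2 x2 t3 x3 t x :: real
  assumes "a + b = 1 - \<phi>g" "x = a * x1 + b * x2 + \<phi>g * x3" "t = a * t1 + \<phi>g * t3" "b * t2 = \<phi>g * t3"
    and "Bl = Bg + Bv"
  shows "a * (A + Bl * t1 + C * x1) + b * (A + Bv * t2 + C * x2) + \<phi>g * (Ag + Bg * t3 + C * x3)
           = (1 - \<phi>g) * A + \<phi>g * Ag + Bl * t + C * x"
proof -
  have "a * (A + Bl * t1 + C * x1) + b * (A + Bv * t2 + C * x2) + \<phi>g * (Ag + Bg * t3 + C * x3)
      = (a + b) * A + \<phi>g * Ag + Bl * (a * t1) + Bv * (b * t2) + Bg * (\<phi>g * t3)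
        + C * (a * x1 + b * x2 + \<phi>g * x3)"
    by (simp add: algebra_simps)
  also have "\<dots> = (1 - \<phi>g) * A + \<phi>g * Ag + Bl * t + C * x"
    unfolding assms(1,3,4,5) assms(2)[symmetric] by (simp add: algebra_simps)
  finally show ?thesis .
qed

lemma mix_entropy_le_affine:
  assumes "0 \<le> \<phi>g" "Bl = Bg + Bv"
    and l: "\<And>t x. (1, t, x) \<in> Dl \<Longrightarrow> spec Sl t x \<le> A + Bl * t + C * x"
    and v: "\<And>t x. (1, t, x) \<in> Dv \<Longrightarrow> spec Sv t x \<le> A + Bv * t + C * x"
    and g: "\<And>t x. (1, t, x) \<in> Dg \<Longrightarrow> spec Sg t x \<le> Ag + Bg * t + C * x"
    and feas: "feasible Dl Dv Dg \<phi>g t x c"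
  shows "mix_entropy Sl Sv Sg \<phi>g c \<le> (1 - \<phi>g) * A + \<phi>g * Ag + Bl * t + C * x"
proof -
  obtain a b t1 x1 t2 x2 t3 x3 where c: "c = (a, b, (t1, x1), (t2, x2), (t3, x3))"
    by (metis prod.exhaust)
  have h: "a \<ge> 0" "b \<ge> 0" "a + b = 1 - \<phi>g" "x = a * x1 + b * x2 + \<phi>g * x3"
    "t = a * t1 + \<phi>g * t3" "b * t2 = \<phi>g * t3"
    "(1, t1, x1) \<in> Dl" "(1, t2, x2) \<in> Dv" "(1, t3, x3) \<in> Dg"
    using feas unfolding c feasible_def by auto
  have "mix_entropy Sl Sv Sg \<phi>g c
      \<le> a * (A + Bl * t1 + C * x1) + b * (A + Bv * t2 + C * x2) + \<phi>g * (Ag + Bg * t3 + C * x3)"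
    unfolding c mix_entropy_def prod.case
    by (intro add_mono mult_left_mono l v g h(1,2,7-9) assms(1))
  also have "\<dots> = (1 - \<phi>g) * A + \<phi>g * Ag + Bl * t + C * x"
    using tangent_planes_mix[OF h(3-6) assms(2)] .
  finally show ?thesis .
qed

lemma s_PT_bounds:
  assumes feas: "feasible Dl Dv Dg \<phi>g t x c"
    and ub: "\<And>c. feasible Dl Dv Dg \<phi>g t x c \<Longrightarrow> mix_entropy Sl Sv Sg \<phi>g c \<le> U"
  shows "mix_entropy Sl Sv Sg \<phi>g c \<le> s_PT Dl Dv Dg Sl Sv Sg t x \<phi>g"
    and "s_PT Dl Dv Dg Sl Sv Sg t x \<phi>g \<le> U"
proof -
  have "bdd_above (mix_entropy Sl Sv Sg \<phi>g ` {c. feasible Dl Dv Dg \<phi>g t x c})"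
    using ub by (intro bdd_aboveI[of _ U]) blast
  then show "mix_entropy Sl Sv Sg \<phi>g c \<le> s_PT Dl Dv Dg Sl Sv Sg t x \<phi>g"
    unfolding s_PT_def using feas by (auto intro: cSup_upper)
  show "s_PT Dl Dv Dg Sl Sv Sg t x \<phi>g \<le> U"
    unfolding s_PT_def using feas ub by (auto intro: cSup_least)
qed

text \<open>A mass d moves from the vapour to the liquid carrying the vapour's specific energy;
  each phase keeps its volume and the vapour keeps its specific energy.\<close>

lemma eventually_feasible_mass_transfer:
  assumes feas: "feasible Dl Dv Dg \<phi>g \<tau> e (\<phi>l, \<phi>v, (\<tau>l, el), (\<tau>v, ev), (\<tau>g, eg))"
    and pos: "\<phi>l > 0" "\<phi>v > 0"
    and int: "(1, \<tau>l, el) \<in> interior Dl" "(1, \<tau>v, ev) \<in> interior Dv"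
  shows "\<forall>\<^sub>F d in at 0. feasible Dl Dv Dg \<phi>g \<tau> e
    (\<phi>l + d, \<phi>v - d, (\<phi>l * \<tau>l / (\<phi>l + d), (\<phi>l * el + d * ev) / (\<phi>l + d)),
      (\<phi>v * \<tau>v / (\<phi>v - d), ev), (\<tau>g, eg))"
proof -
  have "((\<lambda>d. (1::real, \<phi>l * \<tau>l / (\<phi>l + d), (\<phi>l * el + d * ev) / (\<phi>l + d))) \<longlongrightarrow> (1, \<tau>l, el)) (at 0)"
    using pos(1) by (auto intro!: tendsto_eq_intros)
  then have "\<forall>\<^sub>F d in at 0. (1, \<phi>l * \<tau>l / (\<phi>l + d), (\<phi>l * el + d * ev) / (\<phi>l + d)) \<in> interior Dl"
    using topological_tendstoD int(1) open_interior by blast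
  moreover have "((\<lambda>d. (1::real, \<phi>v * \<tau>v / (\<phi>v - d), ev)) \<longlongrightarrow> (1, \<tau>v, ev)) (at 0)"
    using pos(2) by (auto intro!: tendsto_eq_intros)
  then have "\<forall>\<^sub>F d in at 0. (1, \<phi>v * \<tau>v / (\<phi>v - d), ev) \<in> interior Dv"
    using topological_tendstoD int(2) open_interior by blast
  moreover have "\<forall>\<^sub>F d in at (0::real). \<bar>d\<bar> < min \<phi>l \<phi>v"
    using pos by (intro order_tendstoD(2)[of "\<lambda>d. \<bar>d\<bar>" 0]) (auto intro!: tendsto_eq_intros)
  ultimately show ?thesis
  proof eventually_elim
    case (elim d)
    then have "(\<phi>l + d) * (\<phi>l * \<tau>l / (\<phi>l + d)) = \<phi>l * \<tau>l"
      "(\<phi>l + d) * ((\<phi>l * el + d * ev) / (\<phi>l + d)) = \<phi>l * el + d * ev"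
      "(\<phi>v - d) * (\<phi>v * \<tau>v / (\<phi>v - d)) = \<phi>v * \<tau>v"
      by auto
    with feas elim show ?case
      unfolding feasible_def prod.case by (auto simp: algebra_simps dest: interior_subset[THEN subsetD])
  qed
qed

lemma feasible_shift_liquid:
  assumes "feasible Dl Dv Dg \<phi>g \<tau> e (\<phi>l, \<phi>v, (\<tau>l, el), (\<tau>v, ev), (\<tau>g, eg))"
    and pos: "\<phi>l > 0"
    and "(1, \<tau>l + (t - \<tau>) / \<phi>l, el + (x - e) / \<phi>l) \<in> Dl"
  shows "feasible Dl Dv Dg \<phi>g t x
    (\<phi>l, \<phi>v, (\<tau>l + (t - \<tau>) / \<phi>l, el + (x - e) / \<phi>l), (\<tau>v, ev), (\<tau>g, eg))"
proof -
  have "\<phi>l * (\<tau>l + (t - \<tau>) / \<phi>l) = \<phi>l * \<tau>l + (t - \<tau>)"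
    "\<phi>l * (el + (x - e) / \<phi>l) = \<phi>l * el + (x - e)"
    using pos by (simp_all add: field_simps)
  with assms show ?thesis unfolding feasible_def prod.case by (simp add: algebra_simps)
qed

text \<open>With equal temperatures (Cv = Cl) this says that liquid and vapour have equal
  Gibbs free energies; Cl multiplies ev because the transferred mass carries the vapour energy
  into the liquid.\<close>

lemma mass_transfer_stationary:
  assumes feas: "feasible Dl Dv Dg \<phi>g \<tau> e (\<phi>l, \<phi>v, (\<tau>l, el), (\<tau>v, ev), (\<tau>g, eg))"
    and max: "\<forall>c. feasible Dl Dv Dg \<phi>g \<tau> e c \<longrightarrow>
        mix_entropy Sl Sv Sg \<phi>g c \<le> mix_entropy Sl Sv Sg \<phi>g (\<phi>l, \<phi>v, (\<tau>l, el), (\<tau>v, ev), (\<tau>g, eg))"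
    and pos: "\<phi>l > 0" "\<phi>v > 0"
    and int: "(1, \<tau>l, el) \<in> interior Dl" "(1, \<tau>v, ev) \<in> interior Dv"
    and dl: "((\<lambda>(a, b). spec Sl a b) has_derivative (\<lambda>(u, v). Bl * u + Cl * v)) (at (\<tau>l, el))"
    and dv: "((\<lambda>(a, b). spec Sv a b) has_derivative (\<lambda>(u, v). Bv * u + Cv * v)) (at (\<tau>v, ev))"
  shows "spec Sl \<tau>l el - Bl * \<tau>l - Cl * el = spec Sv \<tau>v ev - Bv * \<tau>v - Cl * ev"
proof -
  define tl xl tv where
    "tl d = \<phi>l * \<tau>l / (\<phi>l + d)" and "xl d = (\<phi>l * el + d * ev) / (\<phi>l + d)"
    and "tv d = \<phi>v * \<tau>v / (\<phi>v - d)" for d :: real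
  define F where
    "F d = mix_entropy Sl Sv Sg \<phi>g (\<phi>l + d, \<phi>v - d, (tl d, xl d), (tv d, ev), (\<tau>g, eg))" for d
  have at0: "tl 0 = \<tau>l" "xl 0 = el" "tv 0 = \<tau>v"
    using pos by (simp_all add: tl_def xl_def tv_def)
  define E where "E = spec Sl \<tau>l el - Bl * \<tau>l + Cl * (ev - el) - (spec Sv \<tau>v ev - Bv * \<tau>v)"
  have dSl: "((\<lambda>d. spec Sl (tl d) (xl d)) has_real_derivative Bl * (- \<tau>l / \<phi>l) + Cl * ((ev - el) / \<phi>l)) (at 0)"
    using pos(1) unfolding tl_def xl_def
    by (intro DERIV_compose_uncurry[OF dl])
       (auto intro!: derivative_eq_intros simp: field_simps power2_eq_square)
  have dSv: "((\<lambda>d. spec Sv (tv d) ev) has_real_derivative Bv * (\<tau>v / \<phi>v) + Cv * 0) (at 0)"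
    using pos(2) unfolding tv_def
    by (intro DERIV_compose_uncurry[OF dv])
       (auto intro!: derivative_eq_intros simp: field_simps power2_eq_square)
  have "(F has_real_derivative
      ((\<phi>l + 0) * (Bl * (- \<tau>l / \<phi>l) + Cl * ((ev - el) / \<phi>l)) + 1 * spec Sl (tl 0) (xl 0))
      + ((\<phi>v - 0) * (Bv * (\<tau>v / \<phi>v) + Cv * 0) + (- 1) * spec Sv (tv 0) ev) + 0) (at 0)"
    unfolding F_def mix_entropy_def prod.case
    by (intro DERIV_add DERIV_mult' dSl dSv DERIV_const) (auto intro!: derivative_eq_intros)
  moreover have "((\<phi>l + 0) * (Bl * (- \<tau>l / \<phi>l) + Cl * ((ev - el) / \<phi>l)) + 1 * spec Sl (tl 0) (xl 0))
      + ((\<phi>v - 0) * (Bv * (\<tau>v / \<phi>v) + Cv * 0) + (- 1) * spec Sv (tv 0) ev) + 0 = E"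
    using pos by (simp add: E_def at0 field_simps)
  ultimately have "(F has_real_derivative E) (at 0)"
    by simp
  then have dF: "(F has_derivative (*) E) (at 0)"
    by (simp add: has_field_derivative_def)
  have "\<forall>\<^sub>F d in at 0. feasible Dl Dv Dg \<phi>g \<tau> e (\<phi>l + d, \<phi>v - d, (tl d, xl d), (tv d, ev), (\<tau>g, eg))"
    using eventually_feasible_mass_transfer[OF feas pos int] by (simp add: tl_def xl_def tv_def)
  then have "\<forall>\<^sub>F d in at 0. F d \<le> F 0"
    by eventually_elim (use max in \<open>simp add: F_def at0\<close>)
  from has_derivative_local_max[OF dF this] have "E * 1 = 0"
    by (rule fun_cong)
  then show ?thesis by (simp add: E_def algebra_simps)
qed

lemma s_PT_has_derivative_at_touching_majorant:
  assumes feas: "feasible Dl Dv Dg \<phi>g \<tau> e (\<phi>l, \<phi>v, (\<tau>l, el), (\<tau>v, ev), (\<tau>g, eg))"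
    and pos: "\<phi>l > 0" and int: "(1, \<tau>l, el) \<in> interior Dl"
    and dl: "((\<lambda>(a, b). spec Sl a b) has_derivative (\<lambda>(u, v). B * u + C * v)) (at (\<tau>l, el))"
    and major: "\<And>t x c. feasible Dl Dv Dg \<phi>g t x c \<Longrightarrow> mix_entropy Sl Sv Sg \<phi>g c \<le> A + B * t + C * x"
    and touch: "mix_entropy Sl Sv Sg \<phi>g (\<phi>l, \<phi>v, (\<tau>l, el), (\<tau>v, ev), (\<tau>g, eg)) = A + B * \<tau> + C * e"
  shows "((\<lambda>(t, x). s_PT Dl Dv Dg Sl Sv Sg t x \<phi>g) has_derivative (\<lambda>(u, v). B * u + C * v)) (at (\<tau>, e))"
proof -
  define shift where "shift y = (\<tau>l + (fst y - \<tau>) / \<phi>l, el + (snd y - e) / \<phi>l)" for y :: "real \<times> real"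
  define G where
    "G y = \<phi>l * (\<lambda>(a, b). spec Sl a b) (shift y) + (\<phi>v * spec Sv \<tau>v ev + \<phi>g * spec Sg \<tau>g eg)" for y
  have G_eq: "G y = mix_entropy Sl Sv Sg \<phi>g (\<phi>l, \<phi>v, shift y, (\<tau>v, ev), (\<tau>g, eg))" for y
    by (simp add: G_def shift_def mix_entropy_def)
  have "(shift has_derivative (\<lambda>y. (fst y / \<phi>l, snd y / \<phi>l))) (at (\<tau>, e))"
    unfolding shift_def using pos by (auto intro!: derivative_eq_intros)
  then have "((\<lambda>y. (\<lambda>(a, b). spec Sl a b) (shift y)) has_derivative
      (\<lambda>y. (\<lambda>(u, v). B * u + C * v) (fst y / \<phi>l, snd y / \<phi>l))) (at (\<tau>, e))"
    by (rule has_derivative_compose) (simp add: shift_def dl)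
  then have "(G has_derivative
      (\<lambda>y. \<phi>l * (\<lambda>(u, v). B * u + C * v) (fst y / \<phi>l, snd y / \<phi>l) + 0)) (at (\<tau>, e))"
    unfolding G_def by (intro has_derivative_add has_derivative_mult_right has_derivative_const)
  then have dG: "(G has_derivative (\<lambda>(u, v). B * u + C * v)) (at (\<tau>, e))"
    by (rule has_derivative_eq_rhs) (use pos in \<open>auto simp: fun_eq_iff field_simps\<close>)
  have dU: "((\<lambda>(t, x). A + B * t + C * x) has_derivative (\<lambda>(u, v). B * u + C * v)) (at (\<tau>, e))"
    by (simp add: case_prod_unfold) (auto intro!: derivative_eq_intros)
  have "open ((\<lambda>y. (1::real, shift y)) -` interior Dl)"
    unfolding shift_def using pos by (intro open_vimage continuous_intros) auto
  then have "\<forall>\<^sub>F y in nhds (\<tau>, e). y \<in> (\<lambda>y. (1::real, shift y)) -` interior Dl"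
    by (rule eventually_nhds_in_open) (simp add: shift_def int)
  then have "\<forall>\<^sub>F y in nhds (\<tau>, e). (1, shift y) \<in> interior Dl"
    by simp
  then have "\<forall>\<^sub>F y in nhds (\<tau>, e). G y \<le> (\<lambda>(t, x). s_PT Dl Dv Dg Sl Sv Sg t x \<phi>g) y
      \<and> (\<lambda>(t, x). s_PT Dl Dv Dg Sl Sv Sg t x \<phi>g) y \<le> (\<lambda>(t, x). A + B * t + C * x) y"
  proof eventually_elim
    case (elim y)
    obtain t x where y: "y = (t, x)" by fastforce
    have "feasible Dl Dv Dg \<phi>g t x (\<phi>l, \<phi>v, shift y, (\<tau>v, ev), (\<tau>g, eg))"
      using feasible_shift_liquid[OF feas pos] elim interior_subset by (auto simp: y shift_def)
    from s_PT_bounds[OF this major] show ?case by (simp add: y G_eq)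
  qed
  moreover have "G (\<tau>, e) = (\<lambda>(t, x). A + B * t + C * x) (\<tau>, e)"
    using touch by (simp add: G_eq shift_def)
  ultimately show ?thesis
    by (rule has_derivative_squeeze[OF dG dU])
qed

lemma s_PT_has_derivative_at_equilibrium:
  assumes feas: "feasible Dl Dv Dg \<phi>g \<tau> e (\<phi>l, \<phi>v, (\<tau>l, el), (\<tau>v, ev), (\<tau>g, eg))"
    and max: "\<forall>c. feasible Dl Dv Dg \<phi>g \<tau> e c \<longrightarrow>
        mix_entropy Sl Sv Sg \<phi>g c \<le> mix_entropy Sl Sv Sg \<phi>g (\<phi>l, \<phi>v, (\<tau>l, el), (\<tau>v, ev), (\<tau>g, eg))"
    and "0 \<le> \<phi>g" and pos: "\<phi>l > 0" "\<phi>v > 0"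
    and int: "(1, \<tau>l, el) \<in> interior Dl" "(1, \<tau>v, ev) \<in> interior Dv"
    and dl: "((\<lambda>(a, b). spec Sl a b) has_derivative (\<lambda>(u, v). Bl * u + Cl * v)) (at (\<tau>l, el))"
    and dv: "((\<lambda>(a, b). spec Sv a b) has_derivative (\<lambda>(u, v). Bv * u + Cl * v)) (at (\<tau>v, ev))"
    and tl: "\<And>t x. (1, t, x) \<in> Dl \<Longrightarrow> spec Sl t x \<le> spec Sl \<tau>l el + Bl * (t - \<tau>l) + Cl * (x - el)"
    and tv: "\<And>t x. (1, t, x) \<in> Dv \<Longrightarrow> spec Sv t x \<le> spec Sv \<tau>v ev + Bv * (t - \<tau>v) + Cl * (x - ev)"
    and tg: "\<And>t x. (1, t, x) \<in> Dg \<Longrightarrow> spec Sg t x \<le> spec Sg \<tau>g eg + Bg * (t - \<tau>g) + Cl * (x - eg)"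
    and B: "Bl = Bg + Bv"
  shows "((\<lambda>(t, x). s_PT Dl Dv Dg Sl Sv Sg t x \<phi>g) has_derivative (\<lambda>(u, v). Bl * u + Cl * v)) (at (\<tau>, e))"
proof -
  define A where "A = spec Sl \<tau>l el - Bl * \<tau>l - Cl * el"
  define Ag where "Ag = spec Sg \<tau>g eg - Bg * \<tau>g - Cl * eg"
  have Av: "spec Sv \<tau>v ev - Bv * \<tau>v - Cl * ev = A"
    using mass_transfer_stationary[OF feas max pos int dl dv] by (simp add: A_def)
  have major: "mix_entropy Sl Sv Sg \<phi>g c \<le> (1 - \<phi>g) * A + \<phi>g * Ag + Bl * t + Cl * x"
    if "feasible Dl Dv Dg \<phi>g t x c" for t x c
  proof (rule mix_entropy_le_affine[OF assms(3) B _ _ _ that])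
    show "spec Sl t x \<le> A + Bl * t + Cl * x" if "(1, t, x) \<in> Dl" for t x
      using tl[OF that] by (simp add: A_def algebra_simps)
    show "spec Sv t x \<le> A + Bv * t + Cl * x" if "(1, t, x) \<in> Dv" for t x
      using tv[OF that] Av by (simp add: algebra_simps)
    show "spec Sg t x \<le> Ag + Bg * t + Cl * x" if "(1, t, x) \<in> Dg" for t x
      using tg[OF that] by (simp add: Ag_def algebra_simps)
  qed
  have "spec Sl \<tau>l el = A + Bl * \<tau>l + Cl * el" "spec Sv \<tau>v ev = A + Bv * \<tau>v + Cl * ev"
    "spec Sg \<tau>g eg = Ag + Bg * \<tau>g + Cl * eg"
    using Av by (simp_all add: A_def Ag_def)
  then have touch: "mix_entropy Sl Sv Sg \<phi>g (\<phi>l, \<phi>v, (\<tau>l, el), (\<tau>v, ev), (\<tau>g, eg))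
      = (1 - \<phi>g) * A + \<phi>g * Ag + Bl * \<tau> + Cl * e"
    using feas B unfolding mix_entropy_def feasible_def prod.case
    by (simp only:) (intro tangent_planes_mix; simp)
  show ?thesis
    by (rule s_PT_has_derivative_at_touching_majorant[OF feas pos(1) int(1) dl major touch])
qed

theorem proposition2p5:
  fixes Dl Dv Dg :: "(real \<times> real \<times> real) set"
    and Sl Sv Sg :: "real \<times> real \<times> real \<Rightarrow> real"
    and \<phi>g \<tau> e \<phi>l \<phi>v \<tau>l el \<tau>v ev \<tau>g eg :: real
  assumes "extensive_entropy Dl Sl" "extensive_entropy Dv Sv" "extensive_entropy Dg Sg"
    and "0 \<le> \<phi>g" "\<phi>g \<le> 1" "\<tau> > 0" "e > 0"
    and opt_feas: "feasible Dl Dv Dg \<phi>g \<tau> e (\<phi>l, \<phi>v, (\<tau>l, el), (\<tau>v, ev), (\<tau>g, eg))"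
    and opt_max: "\<forall>c. feasible Dl Dv Dg \<phi>g \<tau> e c \<longrightarrow>
        mix_entropy Sl Sv Sg \<phi>g c \<le> mix_entropy Sl Sv Sg \<phi>g (\<phi>l, \<phi>v, (\<tau>l, el), (\<tau>v, ev), (\<tau>g, eg))"
    and interior: "\<phi>l > 0" "\<phi>v > 0"
      "(1, \<tau>l, el) \<in> interior Dl" "(1, \<tau>v, ev) \<in> interior Dv" "(1, \<tau>g, eg) \<in> interior Dg"
    and temps: "temp Sl \<tau>l el = temp Sg \<tau>g eg" "temp Sg \<tau>g eg = temp Sv \<tau>v ev"
    and press: "pres Sl \<tau>l el = pres Sg \<tau>g eg + pres Sv \<tau>v ev"
  shows "let T = temp Sl \<tau>l el; p = pres Sl \<tau>l el in
           ((\<lambda>(\<tau>', e'). s_PT Dl Dv Dg Sl Sv Sg \<tau>' e' \<phi>g)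
              has_derivative (\<lambda>(d\<tau>, de). (p / T) * d\<tau> + (1 / T) * de)) (at (\<tau>, e))"
proof -
  obtain Bl Cl where dl: "((\<lambda>(a, b). spec Sl a b) has_derivative (\<lambda>(u, v). Bl * u + Cl * v)) (at (\<tau>l, el))"
    and tl: "\<And>t x. (1, t, x) \<in> Dl \<Longrightarrow> spec Sl t x \<le> spec Sl \<tau>l el + Bl * (t - \<tau>l) + Cl * (x - el)"
    and "Cl > 0" and Tl: "temp Sl \<tau>l el = 1 / Cl" and Pl: "pres Sl \<tau>l el = Bl / Cl"
    using extensive_entropy_tangent_plane[OF assms(1) interior(3)] by blast
  obtain Bv Cv where dv: "((\<lambda>(a, b). spec Sv a b) has_derivative (\<lambda>(u, v). Bv * u + Cv * v)) (at (\<tau>v, ev))"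
    and tv: "\<And>t x. (1, t, x) \<in> Dv \<Longrightarrow> spec Sv t x \<le> spec Sv \<tau>v ev + Bv * (t - \<tau>v) + Cv * (x - ev)"
    and "Cv > 0" and Tv: "temp Sv \<tau>v ev = 1 / Cv" and Pv: "pres Sv \<tau>v ev = Bv / Cv"
    using extensive_entropy_tangent_plane[OF assms(2) interior(4)] by blast
  obtain Bg Cg where "((\<lambda>(a, b). spec Sg a b) has_derivative (\<lambda>(u, v). Bg * u + Cg * v)) (at (\<tau>g, eg))"
    and tg: "\<And>t x. (1, t, x) \<in> Dg \<Longrightarrow> spec Sg t x \<le> spec Sg \<tau>g eg + Bg * (t - \<tau>g) + Cg * (x - eg)"
    and "Cg > 0" and Tg: "temp Sg \<tau>g eg = 1 / Cg" and Pg: "pres Sg \<tau>g eg = Bg / Cg"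
    using extensive_entropy_tangent_plane[OF assms(3) interior(5)] by blast
  have C: "Cv = Cl" "Cg = Cl" using temps \<open>Cl > 0\<close> \<open>Cv > 0\<close> \<open>Cg > 0\<close> by (auto simp: Tl Tv Tg)
  have B: "Bl = Bg + Bv" using press \<open>Cl > 0\<close> by (simp add: Pl Pv Pg C field_simps)
  have "((\<lambda>(t, x). s_PT Dl Dv Dg Sl Sv Sg t x \<phi>g) has_derivative (\<lambda>(u, v). Bl * u + Cl * v)) (at (\<tau>, e))"
    using s_PT_has_derivative_at_equilibrium[OF opt_feas opt_max assms(4) interior(1-4)
        dl dv[unfolded C] tl tv[unfolded C] tg[unfolded C] B] .
  then show ?thesis using \<open>Cl > 0\<close> by (simp add: Tl Pl Let_def mult.commute)
qed

end
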